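(* Let $K$ be a field, $S=K[x_1,\dots,x_n]$, $A\subseteq\{1,\dots,n\}$, $f=\prod_{j\in A}x_j$, and let $J\subset I\subset S_f$ be monomial ideals. Let $\mathcal D: I/J=\bigoplus_{i=1}^r u_iK[Z_i]$ be a Stanley decomposition of $I/J$ and $d=\max\{|Z_i|: 1\le i\le r\}$. Then $H_{I/J}(t)=P_{I/J}(t)/(1-t)^d$ for a polynomial $P_{I/J}(t)$ with $P_{I/J}(1)=|\{i:\ |Z_i|=d\}|$.
   Context: $S_f=K[x_1,\dots,x_n,x_j^{-1}:j\in A]$; its monomials are $x^a=x_1^{a_1}\cdots x_n^{a_n}$ with $a_j\in\mathbb Z$ for $j\in A$, $a_j\in\mathbb N$ for $j\notin A$, and form a $K$-basis. Monomial ideals are ideals generated by monomials; for monomial ideals $J\subset I\subset S_f$, $I/J$ has $K$-basis the (classes of) monomials in $I\setminus J$, and is $\mathbb Z^n$-graded with $x^a$ of degree $a$. A Stanley space of $I/J$ is $uK[Z]$, the $K$-span in $I/J$ of all $uw$ with $w$ a monomial in elements of $Z$, where $u\in I\setminus J$ is a monomial, $Z\subseteq\{x_1,\dots,x_n\}\cup\{x_j^{-1}:j\in A\}$ with $\{x_j,x_j^{-1}\}\not\subseteq Z$ for $j\in A$, and $uK[Z]$ is a free $K[Z]$-submodule of $I/J$; its dimension is $|Z|$. A Stanley decomposition is a finite direct sum decomposition (as $K$-vector spaces) of $I/J$ into Stanley spaces. Hilbert series: for a $\mathbb Z^n$-graded $K$-vector space $M=\bigoplus_{a\in\mathbb Z^n}M_a$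 with all $\dim_K M_a<\infty$, set $|a|=\sum_j|a_j|$, $M_d=\bigoplus_{|a|=d}M_a$ for $d\in\mathbb N$, $H(M,d)=\dim_K M_d$ and $H_M(t)=\sum_{d\ge0}H(M,d)t^d$. *)

theory Defs
  imports "HOL-Computational_Algebra.Computational_Algebra"
begin

text \<open>Variables x_1..x_n are indexed by 0..<n. A monomial x^a of S_f is its exponent
  vector a :: nat => int (a j = 0 for j >= n, a j >= 0 for j not in A).\<close>

definition mons :: "nat \<Rightarrow> nat set \<Rightarrow> (nat \<Rightarrow> int) set" where
  "mons n A = {a. (\<forall>j\<ge>n. a j = 0) \<and> (\<forall>j<n. j \<notin> A \<longrightarrow> a j \<ge> 0)}"

text \<open>A monomial ideal of S_f, represented by its set of monomials (which form a K-basis of it):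
  a set of monomials closed under multiplication by arbitrary monomials of S_f.\<close>
definition monomial_ideal :: "nat \<Rightarrow> nat set \<Rightarrow> (nat \<Rightarrow> int) set \<Rightarrow> bool" where
  "monomial_ideal n A I \<longleftrightarrow> I \<subseteq> mons n A \<and> (\<forall>a\<in>I. \<forall>b\<in>mons n A. (\<lambda>j. a j + b j) \<in> I)"

text \<open>Generators of K[Z]: (j, True) stands for x_j, (j, False) for x_j^{-1} (j in A).\<close>
definition gens :: "nat \<Rightarrow> nat set \<Rightarrow> (nat \<times> bool) set" where
  "gens n A = {(j, True) | j. j < n} \<union> {(j, False) | j. j \<in> A}"

definition admissible :: "nat \<Rightarrow> nat set \<Rightarrow> (nat \<times> bool) set \<Rightarrow> bool" where
  "admissible n A Z \<longleftrightarrow> Z \<subseteq> gens n A \<and> (\<forall>j. \<not> ((j, True) \<in> Z \<and> (j, False) \<in> Z))"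

definition gexp :: "nat \<times> bool \<Rightarrow> nat \<Rightarrow> int" where
  "gexp z i = (if i = fst z then (if snd z then 1 else -1) else 0)"

definition zmons :: "(nat \<times> bool) set \<Rightarrow> (nat \<Rightarrow> int) set" where
  "zmons Z = {w. \<exists>c :: nat \<times> bool \<Rightarrow> nat. w = (\<lambda>i. \<Sum>z\<in>Z. int (c z) * gexp z i)}"

definition stanley_mons :: "(nat \<Rightarrow> int) \<Rightarrow> (nat \<times> bool) set \<Rightarrow> (nat \<Rightarrow> int) set" where
  "stanley_mons u Z = (\<lambda>w. (\<lambda>j. u j + w j)) ` zmons Z"

text \<open>uK[Z] is a Stanley space of I/J: u a monomial in I - J, Z admissible, and uK[Z] free
  over K[Z], i.e. no u w vanishes in I/J.\<close>
definition stanley_space ::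
  "nat \<Rightarrow> nat set \<Rightarrow> (nat \<Rightarrow> int) set \<Rightarrow> (nat \<Rightarrow> int) set \<Rightarrow> (nat \<Rightarrow> int) \<Rightarrow> (nat \<times> bool) set \<Rightarrow> bool" where
  "stanley_space n A I J u Z \<longleftrightarrow> u \<in> I \<and> u \<notin> J \<and> admissible n A Z \<and>
     (\<forall>w\<in>zmons Z. (\<lambda>j. u j + w j) \<notin> J)"

text \<open>A Stanley decomposition I/J = (+)_i u_i K[Z_i]: a finite list of Stanley spaces whose
  sum is direct and equals I/J; since all spaces are spanned by monomials, this says the
  monomial sets are pairwise disjoint and cover the monomial basis I - J of I/J.\<close>
definition stanley_decomposition ::
  "nat \<Rightarrow> nat set \<Rightarrow> (nat \<Rightarrow> int) set \<Rightarrow> (nat \<Rightarrow> int) set \<Rightarrow> ((nat \<Rightarrow> int) \<times> (nat \<times> bool) set) list \<Rightarrow> bool" where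
  "stanley_decomposition n A I J D \<longleftrightarrow>
     (\<forall>i<length D. stanley_space n A I J (fst (D ! i)) (snd (D ! i))) \<and>
     (\<forall>i<length D. \<forall>k<length D. i \<noteq> k \<longrightarrow>
        stanley_mons (fst (D ! i)) (snd (D ! i)) \<inter> stanley_mons (fst (D ! k)) (snd (D ! k)) = {}) \<and>
     (\<Union>i<length D. stanley_mons (fst (D ! i)) (snd (D ! i))) = I - J"

definition absdeg :: "nat \<Rightarrow> (nat \<Rightarrow> int) \<Rightarrow> nat" where
  "absdeg n a = nat (\<Sum>j<n. \<bar>a j\<bar>)"

text \<open>H(I/J, d) = dim_K (I/J)_d = number of monomials in I - J with |a| = d.\<close>
definition hilbert_fun :: "nat \<Rightarrow> (nat \<Rightarrow> int) set \<Rightarrow> (nat \<Rightarrow> int) set \<Rightarrow> nat \<Rightarrow> nat" where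
  "hilbert_fun n I J d = card {a \<in> I - J. absdeg n a = d}"

definition hilbert_series :: "nat \<Rightarrow> (nat \<Rightarrow> int) set \<Rightarrow> (nat \<Rightarrow> int) set \<Rightarrow> int fps" where
  "hilbert_series n I J = Abs_fps (\<lambda>d. int (hilbert_fun n I J d))"

end

theory Submission
  imports Defs
begin

text \<open>As a set of exponent vectors, a Stanley space uK[Z] is a box: in coordinate j the
  exponent is u_j, or ranges over [u_j, oo) if x_j is in Z, or over (-oo, u_j] if x_j^-1 is in Z.
  Counting the points of a box by |a| = sum_j |a_j| gives the product of the one-variable series
  counting each coordinate range by absolute value. A singleton contributes a monomial, and a
  half-line a series that is eventually constant 1, i.e. Q(t)/(1-t) with Q(1) = 1. Hence a
  Stanley space of dimension k has Hilbert series Q(t)/(1-t)^k with Q(1) = 1. Summing over a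
  Stanley decomposition with common denominator (1-t)^d, a space with |Z| < d contributes
  Q(t)(1-t)^(d-|Z|), which vanishes at t = 1.\<close>

definition rational_form :: "int fps \<Rightarrow> nat \<Rightarrow> int \<Rightarrow> bool" where
  "rational_form f k c \<longleftrightarrow> (\<exists>P. f * (1 - fps_X) ^ k = fps_of_poly P \<and> poly P 1 = c)"

lemma rational_form_fps_of_poly: "rational_form (fps_of_poly P) 0 (poly P 1)"
  unfolding rational_form_def by auto

lemma rational_form_mult:
  assumes "rational_form f k a" "rational_form g l b"
  shows "rational_form (f * g) (k + l) (a * b)"
proof -
  obtain P Q where P: "f * (1 - fps_X) ^ k = fps_of_poly P" "poly P 1 = a"
    and Q: "g * (1 - fps_X) ^ l = fps_of_poly Q" "poly Q 1 = b"
    using assms unfolding rational_form_def by blast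
  have "f * g * (1 - fps_X) ^ (k + l) = (f * (1 - fps_X) ^ k) * (g * (1 - fps_X) ^ l)"
    by (simp add: power_add ac_simps)
  also have "\<dots> = fps_of_poly (P * Q)"
    by (simp add: P(1) Q(1) fps_of_poly_mult)
  finally have "f * g * (1 - fps_X) ^ (k + l) = fps_of_poly (P * Q)" .
  then show ?thesis unfolding rational_form_def using P(2) Q(2) by auto
qed

lemma rational_form_prod:
  assumes "finite S" "\<And>j. j \<in> S \<Longrightarrow> rational_form (f j) (k j) (c j)"
  shows "rational_form (\<Prod>j\<in>S. f j) (\<Sum>j\<in>S. k j) (\<Prod>j\<in>S. c j)"
  using assms
proof (induction S rule: finite_induct)
  case empty
  show ?case using rational_form_fps_of_poly[of 1] by simp
next
  case (insert x F)
  then show ?case by (simp add: rational_form_mult)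
qed

lemma rational_form_add:
  assumes "rational_form f k a" "rational_form g k b"
  shows "rational_form (f + g) k (a + b)"
proof -
  obtain P Q where P: "f * (1 - fps_X) ^ k = fps_of_poly P" "poly P 1 = a"
    and Q: "g * (1 - fps_X) ^ k = fps_of_poly Q" "poly Q 1 = b"
    using assms unfolding rational_form_def by blast
  have "(f + g) * (1 - fps_X) ^ k = fps_of_poly (P + Q)"
    by (simp add: distrib_right fps_of_poly_add P(1) Q(1))
  then show ?thesis unfolding rational_form_def using P(2) Q(2) by auto
qed

lemma rational_form_sum:
  assumes "finite S" "\<And>j. j \<in> S \<Longrightarrow> rational_form (f j) k (c j)"
  shows "rational_form (\<Sum>j\<in>S. f j) k (\<Sum>j\<in>S. c j)"
  using assms
proof (induction S rule: finite_induct)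
  case empty
  show ?case unfolding rational_form_def by (intro exI[of _ 0]) simp
next
  case (insert x F)
  then show ?case by (simp add: rational_form_add)
qed

lemma rational_form_1_minus_X: "rational_form 1 1 0"
proof -
  have "1 * (1 - fps_X) ^ 1 = fps_of_poly (1 - [:0, 1:] :: int poly)"
    by (simp add: fps_of_poly_diff fps_of_poly_pCons)
  then show ?thesis unfolding rational_form_def by force
qed

lemma rational_form_raise:
  assumes "rational_form f k c" "k \<le> d"
  shows "rational_form f d (if k = d then c else 0)"
proof -
  have "rational_form 1 (d - k) (0 ^ (d - k))"
    using rational_form_prod[of "{..<d - k}" "\<lambda>_. 1" "\<lambda>_. 1" "\<lambda>_. 0"] rational_form_1_minus_X
    by simp
  from rational_form_mult[OF assms(1) this] show ?thesis
    using assms(2) by (cases "k = d") (auto simp: power_0_left)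
qed

lemma rational_form_eventually_const:
  assumes "\<And>d. d \<ge> N \<Longrightarrow> f $ d = L"
  shows "rational_form f 1 L"
proof -
  define h where "h = f * (1 - fps_X)"
  have h_Suc: "h $ Suc m = f $ Suc m - f $ m" for m
    by (simp add: h_def algebra_simps mult.commute[of f])
  have h_0: "h $ 0 = f $ 0"
    by (simp add: h_def)
  have h_partial_sums: "(\<Sum>i\<le>m. h $ i) = f $ m" for m
    by (induction m) (simp_all add: h_0 h_Suc)
  have h_vanishes: "h $ d = 0" if "d > N" for d
    using that h_Suc[of "d - 1"] assms[of d] assms[of "d - 1"] by (cases d) auto
  define P where "P = (\<Sum>i\<le>N. monom (h $ i) i)"
  have "fps_of_poly P = h"
  proof (rule fps_ext)
    fix d
    show "fps_of_poly P $ d = h $ d"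
      using h_vanishes[of d] by (simp add: P_def coeff_sum)
  qed
  moreover have "poly P 1 = L"
    using h_partial_sums[of N] assms[of N] by (simp add: P_def poly_sum poly_monom)
  ultimately show ?thesis unfolding rational_form_def h_def by (metis power_one_right)
qed

definition abs_series :: "int set \<Rightarrow> int fps" where
  "abs_series S = Abs_fps (\<lambda>d. int (card {x \<in> S. \<bar>x\<bar> = int d}))"

lemma finite_abs_level: "finite {x \<in> S. \<bar>x\<bar> = (c :: int)}"
  by (rule finite_subset[of _ "{c, - c}"]) auto

lemma rational_form_abs_series_singleton: "rational_form (abs_series {c}) 0 1"
proof -
  have "abs_series {c} = fps_of_poly (monom 1 (nat \<bar>c\<bar>))"
  proof (rule fps_ext)
    fix d
    have "{x \<in> {c}. \<bar>x\<bar> = int d} = (if d = nat \<bar>c\<bar> then {c} else {})"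
      by auto
    then show "abs_series {c} $ d = fps_of_poly (monom 1 (nat \<bar>c\<bar>)) $ d"
      by (simp add: abs_series_def)
  qed
  then show ?thesis
    using rational_form_fps_of_poly[of "monom 1 (nat \<bar>c\<bar>)"] by (simp add: poly_monom)
qed

lemma rational_form_abs_series_atLeast: "rational_form (abs_series {c..}) 1 1"
proof (rule rational_form_eventually_const[of "nat \<bar>c\<bar> + 1"])
  fix d assume "d \<ge> nat \<bar>c\<bar> + 1"
  then have "{x \<in> {c..}. \<bar>x\<bar> = int d} = {int d}"
    by auto
  then show "abs_series {c..} $ d = 1"
    by (simp add: abs_series_def)
qed

lemma abs_series_atMost: "abs_series {..c} = abs_series {-c..}"
proof -
  have "{x \<in> {..c}. \<bar>x\<bar> = int d} = uminus ` {x \<in> {-c..}. \<bar>x\<bar> = int d}" for d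
    by (auto simp: image_iff intro!: exI[of _ "- _"])
  then show ?thesis
    by (simp add: abs_series_def card_image)
qed

lemma rational_form_abs_series_atMost: "rational_form (abs_series {..c}) 1 1"
  unfolding abs_series_atMost by (rule rational_form_abs_series_atLeast)

definition box :: "nat \<Rightarrow> (nat \<Rightarrow> int set) \<Rightarrow> (nat \<Rightarrow> int) set" where
  "box k T = {a. (\<forall>j<k. a j \<in> T j) \<and> (\<forall>j\<ge>k. a j = 0)}"

definition box_level :: "nat \<Rightarrow> (nat \<Rightarrow> int set) \<Rightarrow> nat \<Rightarrow> (nat \<Rightarrow> int) set" where
  "box_level k T d = {a \<in> box k T. (\<Sum>j<k. \<bar>a j\<bar>) = int d}"

lemma box_level_0: "box_level 0 T d = (if d = 0 then {\<lambda>_. 0} else {})"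
  by (auto simp: box_level_def box_def)

lemma box_level_Suc:
  "box_level (Suc k) T d =
     (\<lambda>(e, b, x). b(k := x)) ` (SIGMA e:{..d}. box_level k T e \<times> {x \<in> T k. \<bar>x\<bar> = int (d - e)})"
proof (intro set_eqI iffI)
  fix a assume a: "a \<in> box_level (Suc k) T d"
  define e where "e = nat (\<Sum>j<k. \<bar>a j\<bar>)"
  have e: "(\<Sum>j<k. \<bar>a j\<bar>) = int e"
    by (simp add: e_def sum_nonneg)
  have restrict: "(\<Sum>j<k. \<bar>(a(k := 0)) j\<bar>) = (\<Sum>j<k. \<bar>a j\<bar>)"
    by (rule sum.cong) auto
  have total: "(\<Sum>j<k. \<bar>a j\<bar>) + \<bar>a k\<bar> = int d"
    using a by (simp add: box_level_def)
  have "(e, a(k := 0), a k) \<in> (SIGMA e:{..d}. box_level k T e \<times> {x \<in> T k. \<bar>x\<bar> = int (d - e)})"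
    using a e restrict total by (auto simp: box_level_def box_def)
  moreover have "a = (\<lambda>(e, b, x). b(k := x)) (e, a(k := 0), a k)"
    by simp
  ultimately show "a \<in> (\<lambda>(e, b, x). b(k := x)) `
      (SIGMA e:{..d}. box_level k T e \<times> {x \<in> T k. \<bar>x\<bar> = int (d - e)})"
    by blast
next
  fix a assume "a \<in> (\<lambda>(e, b, x). b(k := x)) `
      (SIGMA e:{..d}. box_level k T e \<times> {x \<in> T k. \<bar>x\<bar> = int (d - e)})"
  then obtain e b x where ebx: "e \<le> d" "b \<in> box_level k T e" "x \<in> T k" "\<bar>x\<bar> = int (d - e)"
    and a: "a = b(k := x)"
    by auto
  have "(\<Sum>j<k. \<bar>(b(k := x)) j\<bar>) = (\<Sum>j<k. \<bar>b j\<bar>)"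
    by (rule sum.cong) auto
  then show "a \<in> box_level (Suc k) T d"
    using ebx unfolding a by (auto simp: box_level_def box_def less_Suc_eq)
qed

lemma inj_on_box_level_Suc:
  "inj_on (\<lambda>(e, b, x). b(k := x)) (SIGMA e:{..d}. box_level k T e \<times> X e)"
proof (rule inj_onI, clarsimp)
  fix e b x e' b' x'
  assume b: "b \<in> box_level k T e" "b' \<in> box_level k T e'" and eq: "b(k := x) = b'(k := x')"
  have "b = b'"
  proof
    fix j show "b j = b' j"
      using fun_cong[OF eq, of j] b by (cases "j = k") (auto simp: box_level_def box_def)
  qed
  moreover have "x = x'"
    using fun_cong[OF eq, of k] by simp
  moreover have "e = e'"
    using b \<open>b = b'\<close> by (simp add: box_level_def)
  ultimately show "e = e' \<and> b = b' \<and> x = x'"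
    by simp
qed

lemma finite_box_level: "finite (box_level k T d)"
  by (induction k arbitrary: d) (simp_all add: box_level_0 box_level_Suc finite_abs_level)

lemma box_level_series: "Abs_fps (\<lambda>d. int (card (box_level k T d))) = (\<Prod>j<k. abs_series (T j))"
proof (induction k)
  case 0
  show ?case by (rule fps_ext) (simp add: box_level_0)
next
  case (Suc k)
  have "card (box_level (Suc k) T d) =
      (\<Sum>e\<le>d. card (box_level k T e) * card {x \<in> T k. \<bar>x\<bar> = int (d - e)})" for d
  proof -
    have "card (box_level (Suc k) T d) =
        card (SIGMA e:{..d}. box_level k T e \<times> {x \<in> T k. \<bar>x\<bar> = int (d - e)})"
      unfolding box_level_Suc by (intro card_image inj_on_box_level_Suc)
    also have "\<dots> = (\<Sum>e\<le>d. card (box_level k T e \<times> {x \<in> T k. \<bar>x\<bar> = int (d - e)}))"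
      by (rule card_SigmaI) (simp_all add: finite_box_level finite_abs_level)
    finally show ?thesis
      by (simp add: card_cartesian_product)
  qed
  then have "Abs_fps (\<lambda>d. int (card (box_level (Suc k) T d))) =
      Abs_fps (\<lambda>d. int (card (box_level k T d))) * abs_series (T k)"
    by (intro fps_ext) (simp add: fps_mult_nth abs_series_def atLeast0AtMost)
  then show ?case
    using Suc by simp
qed

definition deg_series :: "nat \<Rightarrow> (nat \<Rightarrow> int) set \<Rightarrow> int fps" where
  "deg_series n S = Abs_fps (\<lambda>d. int (card {a \<in> S. absdeg n a = d}))"

lemma deg_level_box: "{a \<in> box n T. absdeg n a = d} = box_level n T d"
  by (auto simp: box_level_def absdeg_def sum_nonneg)

lemma deg_series_box: "deg_series n (box n T) = (\<Prod>j<n. abs_series (T j))"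
  by (simp add: deg_series_def deg_level_box box_level_series)

lemma finite_deg_level:
  assumes "\<And>a j. a \<in> S \<Longrightarrow> n \<le> j \<Longrightarrow> a j = 0"
  shows "finite {a \<in> S. absdeg n a = d}"
proof (rule finite_subset)
  show "{a \<in> S. absdeg n a = d} \<subseteq> {a \<in> box n (\<lambda>_. UNIV). absdeg n a = d}"
    using assms by (auto simp: box_def)
qed (simp add: deg_level_box finite_box_level)

lemma deg_series_UN_disjoint:
  assumes "finite X" "\<And>i k. i \<in> X \<Longrightarrow> k \<in> X \<Longrightarrow> i \<noteq> k \<Longrightarrow> S i \<inter> S k = {}"
    and "\<And>i a j. i \<in> X \<Longrightarrow> a \<in> S i \<Longrightarrow> n \<le> j \<Longrightarrow> a j = 0"
  shows "deg_series n (\<Union>i\<in>X. S i) = (\<Sum>i\<in>X. deg_series n (S i))"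
proof (rule fps_ext)
  fix d
  have "{a \<in> (\<Union>i\<in>X. S i). absdeg n a = d} = (\<Union>i\<in>X. {a \<in> S i. absdeg n a = d})"
    by blast
  moreover have "card (\<Union>i\<in>X. {a \<in> S i. absdeg n a = d}) = (\<Sum>i\<in>X. card {a \<in> S i. absdeg n a = d})"
    using assms by (intro card_UN_disjoint) (auto intro: finite_deg_level)
  ultimately show "deg_series n (\<Union>i\<in>X. S i) $ d = (\<Sum>i\<in>X. deg_series n (S i)) $ d"
    by (simp add: deg_series_def fps_sum_nth)
qed

lemma gens_subset: "A \<subseteq> {..<n} \<Longrightarrow> gens n A \<subseteq> {..<n} \<times> UNIV"
  by (auto simp: gens_def)

lemma admissible_finite_bounded:
  assumes "A \<subseteq> {..<n}" "admissible n A Z"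
  shows "finite Z" "fst ` Z \<subseteq> {..<n}"
proof -
  have Z: "Z \<subseteq> {..<n} \<times> UNIV"
    using assms(2) gens_subset[OF assms(1)] by (auto simp: admissible_def)
  then show "finite Z"
    by (rule finite_subset) simp
  show "fst ` Z \<subseteq> {..<n}"
    using Z by auto
qed

lemma sum_gexp:
  assumes "finite Z"
  shows "(\<Sum>z\<in>Z. int (c z) * gexp z j) =
    (if (j, True) \<in> Z then int (c (j, True)) else 0) - (if (j, False) \<in> Z then int (c (j, False)) else 0)"
proof -
  have "int (c z) * gexp z j =
      (if z = (j, True) then int (c z) else 0) - (if z = (j, False) then int (c z) else 0)" for z
    by (cases z) (auto simp: gexp_def)
  then show ?thesis
    using assms by (simp add: sum_subtractf)
qed

lemma zmons_iff:
  assumes "finite Z" "\<And>j. \<not> ((j, True) \<in> Z \<and> (j, False) \<in> Z)"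
  shows "w \<in> zmons Z \<longleftrightarrow>
    (\<forall>j. if (j, True) \<in> Z then w j \<ge> 0 else if (j, False) \<in> Z then w j \<le> 0 else w j = 0)"
proof
  assume "w \<in> zmons Z"
  then obtain c where "w = (\<lambda>j. \<Sum>z\<in>Z. int (c z) * gexp z j)"
    by (auto simp: zmons_def)
  then show "\<forall>j. if (j, True) \<in> Z then w j \<ge> 0 else if (j, False) \<in> Z then w j \<le> 0 else w j = 0"
    using assms by (auto simp: sum_gexp)
next
  assume signs: "\<forall>j. if (j, True) \<in> Z then w j \<ge> 0 else if (j, False) \<in> Z then w j \<le> 0 else w j = 0"
  define c where "c z = nat \<bar>w (fst z)\<bar>" for z :: "nat \<times> bool"
  have "w = (\<lambda>j. \<Sum>z\<in>Z. int (c z) * gexp z j)"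
  proof
    fix j show "w j = (\<Sum>z\<in>Z. int (c z) * gexp z j)"
      unfolding sum_gexp[OF assms(1)] c_def using signs[rule_format, of j] assms(2)[of j]
      by (auto split: if_splits)
  qed
  then show "w \<in> zmons Z"
    unfolding zmons_def by blast
qed

definition coord_set :: "(nat \<Rightarrow> int) \<Rightarrow> (nat \<times> bool) set \<Rightarrow> nat \<Rightarrow> int set" where
  "coord_set u Z j =
     (if (j, True) \<in> Z then {u j..} else if (j, False) \<in> Z then {..u j} else {u j})"

lemma stanley_mons_eq_box:
  assumes "A \<subseteq> {..<n}" "admissible n A Z" "u \<in> mons n A"
  shows "stanley_mons u Z = box n (coord_set u Z)"
proof -
  have Z: "finite Z" "\<And>j. \<not> ((j, True) \<in> Z \<and> (j, False) \<in> Z)" "\<And>z. z \<in> Z \<Longrightarrow> fst z < n"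
    using admissible_finite_bounded[OF assms(1,2)] assms(2) by (auto simp: admissible_def)
  have u: "u j = 0" if "n \<le> j" for j
    using assms(3) that by (simp add: mons_def)
  have "a \<in> stanley_mons u Z \<longleftrightarrow> a \<in> box n (coord_set u Z)" for a
  proof -
    have "a \<in> stanley_mons u Z \<longleftrightarrow> (\<lambda>j. a j - u j) \<in> zmons Z"
    proof
      assume "a \<in> stanley_mons u Z"
      then show "(\<lambda>j. a j - u j) \<in> zmons Z"
        by (auto simp: stanley_mons_def)
    next
      assume "(\<lambda>j. a j - u j) \<in> zmons Z"
      then show "a \<in> stanley_mons u Z"
        unfolding stanley_mons_def by (rule image_eqI[rotated]) simp
    qed
    also have "\<dots> \<longleftrightarrow> a \<in> box n (coord_set u Z)"
    proof -
      have "(if (j, True) \<in> Z then a j - u j \<ge> 0 else if (j, False) \<in> Z then a j - u j \<le> 0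
               else a j - u j = 0) \<longleftrightarrow> (if j < n then a j \<in> coord_set u Z j else a j = 0)" for j
        using Z(3)[of "(j, True)"] Z(3)[of "(j, False)"] u[of j] by (auto simp: coord_set_def)
      then show ?thesis
        unfolding zmons_iff[OF Z(1,2)] box_def by (auto simp: not_le)
    qed
    finally show ?thesis .
  qed
  then show ?thesis
    by blast
qed

lemma rational_form_abs_series_coord_set:
  assumes "\<And>j. \<not> ((j, True) \<in> Z \<and> (j, False) \<in> Z)"
  shows "rational_form (abs_series (coord_set u Z j)) (card {z \<in> Z. fst z = j}) 1"
proof -
  have fiber: "{z \<in> Z. fst z = j} = ({(j, True)} \<inter> Z) \<union> ({(j, False)} \<inter> Z)"
    by auto
  consider "(j, True) \<in> Z" | "(j, True) \<notin> Z" "(j, False) \<in> Z" | "(j, True) \<notin> Z" "(j, False) \<notin> Z"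
    by blast
  then show ?thesis
  proof cases
    case 1
    then show ?thesis
      using assms[of j] rational_form_abs_series_atLeast[of "u j"]
      unfolding fiber coord_set_def by simp
  next
    case 2
    then show ?thesis
      using rational_form_abs_series_atMost[of "u j"]
      unfolding fiber coord_set_def by simp
  next
    case 3
    then show ?thesis
      unfolding fiber coord_set_def by (simp add: rational_form_abs_series_singleton)
  qed
qed

lemma rational_form_stanley_mons:
  assumes "A \<subseteq> {..<n}" "admissible n A Z" "u \<in> mons n A"
  shows "rational_form (deg_series n (stanley_mons u Z)) (card Z) 1"
proof -
  have Z: "finite Z" "fst ` Z \<subseteq> {..<n}" "\<And>j. \<not> ((j, True) \<in> Z \<and> (j, False) \<in> Z)"
    using admissible_finite_bounded[OF assms(1,2)] assms(2) by (auto simp: admissible_def)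
  have "card Z = (\<Sum>j<n. card {z \<in> Z. fst z = j})"
    unfolding card_eq_sum using sum.group[OF Z(1) finite_lessThan Z(2), of "\<lambda>_. 1 :: nat"] by simp
  moreover have "deg_series n (stanley_mons u Z) = (\<Prod>j<n. abs_series (coord_set u Z j))"
    using stanley_mons_eq_box[OF assms] deg_series_box by simp
  ultimately show ?thesis
    using rational_form_prod[of "{..<n}", OF _ rational_form_abs_series_coord_set[OF Z(3)]] by simp
qed

lemma hilbert_series_stanley_decomposition:
  assumes "monomial_ideal n A I" "stanley_decomposition n A I J D"
  shows "hilbert_series n I J =
    (\<Sum>i<length D. deg_series n (stanley_mons (fst (D ! i)) (snd (D ! i))))"
proof -
  define S where "S i = stanley_mons (fst (D ! i)) (snd (D ! i))" for i
  have decomp: "\<And>i l. i < length D \<Longrightarrow> l < length D \<Longrightarrow> i \<noteq> l \<Longrightarrow> S i \<inter> S l = {}"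
    "(\<Union>i<length D. S i) = I - J"
    using assms(2) by (auto simp: stanley_decomposition_def S_def)
  have vanishing: "a j = 0" if "i < length D" "a \<in> S i" "n \<le> j" for i a j
    using that decomp(2) assms(1) by (auto simp: monomial_ideal_def mons_def)
  have "hilbert_series n I J = deg_series n (\<Union>i<length D. S i)"
    by (simp add: decomp(2) hilbert_series_def hilbert_fun_def deg_series_def)
  also have "\<dots> = (\<Sum>i<length D. deg_series n (S i))"
    using decomp(1) vanishing by (intro deg_series_UN_disjoint) auto
  finally show ?thesis
    unfolding S_def .
qed

theorem theorem6p5:
  fixes n :: nat and A :: "nat set" and I J :: "(nat \<Rightarrow> int) set"
    and D :: "((nat \<Rightarrow> int) \<times> (nat \<times> bool) set) list"
  assumes "A \<subseteq> {..<n}"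
    and "monomial_ideal n A I" and "monomial_ideal n A J" and "J \<subseteq> I"
    and "stanley_decomposition n A I J D"
  shows "let d = Max (insert 0 ((\<lambda>i. card (snd (D ! i))) ` {..<length D})) in
    \<exists>P :: int poly. hilbert_series n I J * (1 - fps_X) ^ d = fps_of_poly P \<and>
      poly P 1 = int (card {i. i < length D \<and> card (snd (D ! i)) = d})"
proof -
  define k where "k i = card (snd (D ! i))" for i
  define d where "d = Max (insert 0 (k ` {..<length D}))"
  have "rational_form (deg_series n (stanley_mons (fst (D ! i)) (snd (D ! i)))) d
      (if k i = d then 1 else 0)" if "i < length D" for i
  proof (rule rational_form_raise)
    have "stanley_space n A I J (fst (D ! i)) (snd (D ! i))" "I \<subseteq> mons n A"
      using that assms(2,5) by (auto simp: stanley_decomposition_def monomial_ideal_def)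
    then show "rational_form (deg_series n (stanley_mons (fst (D ! i)) (snd (D ! i)))) (k i) 1"
      unfolding k_def stanley_space_def by (intro rational_form_stanley_mons[OF assms(1)]) auto
    show "k i \<le> d"
      using that unfolding d_def by (intro Max_ge) auto
  qed
  then have "rational_form (hilbert_series n I J) d (\<Sum>i<length D. if k i = d then 1 else 0)"
    unfolding hilbert_series_stanley_decomposition[OF assms(2,5)] by (intro rational_form_sum) auto
  moreover have "(\<Sum>i<length D. if k i = d then 1 else 0) = int (card {i. i < length D \<and> k i = d})"
    by (simp add: sum.If_cases Int_def conj_commute)
  ultimately show ?thesis
    unfolding Let_def rational_form_def d_def k_def by simp
qed

end
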